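(* For all $a, b \in \mathbb{N}$, $R_\mathrm{cyc}(K_a, P_b^\mathrm{mon}) = 1 + (a-1)(b-1)$.
   Context: All graphs are finite, simple and undirected, and a graph of order $n$ has vertex set $\{0,1,\ldots,n-1\}$; $K_n$ is the complete graph on $\{0,\ldots,n-1\}$. A $2$-edge-coloring of $K_n$ assigns each edge a color in $\{1,2\}$. An embedding of $H$ in color $j$ is an injective map $\varphi\colon V(H)\to V(K_n)$ such that every edge $uv$ of $H$ goes to an edge $\{\varphi(u),\varphi(v)\}$ of color $j$; it is increasing up to a cyclic permutation if there exists $t\in V(H)$ such that $(\varphi(t),\ldots,\varphi(|H|-1),\varphi(0),\ldots,\varphi(t-1))$ is increasing. $R_\mathrm{cyc}(H_1,H_2)$ is the smallest $n$ such that every $2$-edge-coloring of $K_n$ admits an embedding of $H_1$ in color $1$ or of $H_2$ in color $2$ that is increasing up to a cyclic permutation. The monotone path $P_n^\mathrm{mon}$ has edges $\{i,i+1\}$, $0\le i\le n-2$. *)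

theory Defs
  imports Main
begin

text \<open>A graph of order h is represented as a pair (h, E) where E is a set of
  2-element subsets of {0..<h}.\<close>
type_synonym graph = "nat \<times> nat set set"

definition complete_graph :: "nat \<Rightarrow> graph" where
  "complete_graph n = (n, {{u, v} | u v. u < n \<and> v < n \<and> u \<noteq> v})"

definition mon_path :: "nat \<Rightarrow> graph" where
  "mon_path n = (n, {{i, Suc i} | i. Suc i < n})"

definition two_coloring :: "nat \<Rightarrow> (nat set \<Rightarrow> nat) \<Rightarrow> bool" where
  "two_coloring n c \<longleftrightarrow> (\<forall>u v. u < n \<and> v < n \<and> u \<noteq> v \<longrightarrow> c {u, v} \<in> {1, 2})"

definition embedding ::
  "nat \<Rightarrow> (nat set \<Rightarrow> nat) \<Rightarrow> nat \<Rightarrow> graph \<Rightarrow> (nat \<Rightarrow> nat) \<Rightarrow> bool" where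
  "embedding n c j H \<phi> \<longleftrightarrow>
     inj_on \<phi> {..<fst H} \<and> \<phi> ` {..<fst H} \<subseteq> {..<n} \<and>
     (\<forall>u v. {u, v} \<in> snd H \<longrightarrow> c {\<phi> u, \<phi> v} = j)"

definition cyc_increasing :: "nat \<Rightarrow> (nat \<Rightarrow> nat) \<Rightarrow> bool" where
  "cyc_increasing h \<phi> \<longleftrightarrow>
     (\<exists>t < h. sorted_wrt (<) (map \<phi> ([t..<h] @ [0..<t])))"

definition R_cyc :: "graph \<Rightarrow> graph \<Rightarrow> nat" where
  "R_cyc H1 H2 = (LEAST n. \<forall>c. two_coloring n c \<longrightarrow>
      (\<exists>\<phi>. embedding n c 1 H1 \<phi> \<and> cyc_increasing (fst H1) \<phi>) \<or>
      (\<exists>\<phi>. embedding n c 2 H2 \<phi> \<and> cyc_increasing (fst H2) \<phi>))"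

end

theory Submission
  imports Defs
begin

text \<open>Upper bound: in a 2-coloring of \<open>1 + (a - 1)(b - 1)\<close> vertices, call a vertex a source
  if it is not the upper end of a color-2 edge. The sources form a color-1 clique; if there are
  fewer than \<open>a\<close> of them, the remaining vertices contain (by induction on \<open>b\<close>) an increasing
  color-2 path on \<open>b - 1\<close> vertices, and its first vertex, not being a source, extends it
  downwards. Lower bound: split the vertices into \<open>a - 1\<close> blocks of \<open>b - 1\<close> consecutive
  vertices and color an edge 2 exactly when it lies inside a block.\<close>

definition clique :: "('a set \<Rightarrow> bool) \<Rightarrow> 'a set \<Rightarrow> bool" where
  "clique P K \<longleftrightarrow> (\<forall>u\<in>K. \<forall>v\<in>K. u \<noteq> v \<longrightarrow> P {u, v})"

lemma clique_subset: "clique P K \<Longrightarrow> L \<subseteq> K \<Longrightarrow> clique P L"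
  unfolding clique_def by blast

lemma clique_or_increasing_path:
  fixes S :: "'a::linorder set"
  assumes "finite S" and "1 + (a - 1) * b \<le> card S"
  shows "(\<exists>K \<subseteq> S. card K = a \<and> clique (\<lambda>e. \<not> P e) K) \<or>
    (\<exists>xs. length xs = Suc b \<and> set xs \<subseteq> S \<and> sorted_wrt (<) xs \<and>
       successively (\<lambda>x y. P {x, y}) xs)"
  using assms
proof (induction b arbitrary: S)
  case 0
  then obtain x where "x \<in> S" by fastforce
  then show ?case by (intro disjI2 exI[of _ "[x]"]) auto
next
  case (Suc b)
  define A where "A = {v \<in> S. \<forall>w\<in>S. w < v \<longrightarrow> \<not> P {w, v}}"
  have "A \<subseteq> S" unfolding A_def by blast
  have clique_A: "clique (\<lambda>e. \<not> P e) A"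
    unfolding clique_def
  proof (intro ballI impI)
    fix u v assume "u \<in> A" "v \<in> A" "u \<noteq> v"
    then consider "u < v" | "v < u" by fastforce
    then show "\<not> P {u, v}"
      using \<open>u \<in> A\<close> \<open>v \<in> A\<close> unfolding A_def by cases (auto simp: insert_commute)
  qed
  show ?case
  proof (cases "a \<le> card A")
    case True
    then obtain K where "K \<subseteq> A" "card K = a" by (meson obtain_subset_with_card_n)
    then show ?thesis using \<open>A \<subseteq> S\<close> clique_subset[OF clique_A] by blast
  next
    case False
    have "finite (S - A)" using Suc.prems(1) by blast
    have "card (S - A) = card S - card A"
      using Suc.prems(1) \<open>A \<subseteq> S\<close> by (simp add: card_Diff_subset finite_subset)
    with False Suc.prems(2) have "1 + (a - 1) * b \<le> card (S - A)" by simp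
    from Suc.IH[OF \<open>finite (S - A)\<close> this] show ?thesis
    proof (elim disjE exE conjE)
      fix K assume "K \<subseteq> S - A" "card K = a" "clique (\<lambda>e. \<not> P e) K"
      then show ?thesis by blast
    next
      fix xs assume xs: "length xs = Suc b" "set xs \<subseteq> S - A" "sorted_wrt (<) xs"
        "successively (\<lambda>x y. P {x, y}) xs"
      then obtain x ys where "xs = x # ys" by (cases xs) auto
      with xs(2) obtain w where "w \<in> S" "w < x" "P {w, x}" unfolding A_def by auto
      with xs \<open>xs = x # ys\<close> show ?thesis
        by (intro disjI2 exI[of _ "w # xs"]) (auto simp: sorted_wrt2)
    qed
  qed
qed

lemma fst_complete_graph [simp]: "fst (complete_graph n) = n"
  by (simp add: complete_graph_def)

lemma fst_mon_path [simp]: "fst (mon_path n) = n"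
  by (simp add: mon_path_def)

lemma edge_complete_graph_iff: "{u, v} \<in> snd (complete_graph n) \<longleftrightarrow> u < n \<and> v < n \<and> u \<noteq> v"
  by (auto simp: complete_graph_def doubleton_eq_iff)

lemma edge_mon_path_iff: "{i, Suc i} \<in> snd (mon_path n) \<longleftrightarrow> Suc i < n"
  by (auto simp: mon_path_def doubleton_eq_iff)

lemma embedding_inj_on: "embedding n c j H \<phi> \<Longrightarrow> inj_on \<phi> {..<fst H}"
  unfolding embedding_def by blast

lemma embedding_image_subset: "embedding n c j H \<phi> \<Longrightarrow> \<phi> ` {..<fst H} \<subseteq> {..<n}"
  unfolding embedding_def by blast

lemma embedding_edge: "embedding n c j H \<phi> \<Longrightarrow> {u, v} \<in> snd H \<Longrightarrow> c {\<phi> u, \<phi> v} = j"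
  unfolding embedding_def by blast

lemma cyc_increasing_nth:
  assumes "xs \<noteq> []" and "sorted_wrt (<) xs"
  shows "cyc_increasing (length xs) (nth xs)"
  unfolding cyc_increasing_def using assms by (intro exI[of _ 0]) (simp add: map_nth)

lemma embedding_complete_graph_nth:
  assumes "set xs \<subseteq> {..<n}" and "distinct xs" and "clique (\<lambda>e. c e = j) (set xs)"
  shows "embedding n c j (complete_graph (length xs)) (nth xs)"
  unfolding embedding_def
proof (intro conjI allI impI)
  fix u v assume "{u, v} \<in> snd (complete_graph (length xs))"
  with assms(2,3) show "c {xs ! u, xs ! v} = j"
    by (simp add: edge_complete_graph_iff clique_def nth_eq_iff_index_eq)
qed (use assms nth_mem in \<open>fastforce simp: inj_on_nth\<close>)+

lemma embedding_mon_path_nth: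
  assumes "set xs \<subseteq> {..<n}" and "distinct xs" and "successively (\<lambda>x y. c {x, y} = j) xs"
  shows "embedding n c j (mon_path (length xs)) (nth xs)"
  unfolding embedding_def
proof (intro conjI allI impI)
  fix u v assume "{u, v} \<in> snd (mon_path (length xs))"
  then obtain i where "{u, v} = {i, Suc i}" "Suc i < length xs" by (auto simp: mon_path_def)
  with assms(3) show "c {xs ! u, xs ! v} = j"
    by (auto simp: doubleton_eq_iff insert_commute successively_conv_nth)
qed (use assms nth_mem in \<open>fastforce simp: inj_on_nth\<close>)+

lemma cyc_embedding_clique_or_mon_path:
  assumes "1 \<le> a" and "1 \<le> b" and "1 + (a - 1) * (b - 1) \<le> n" and "two_coloring n c"
  shows "(\<exists>\<phi>. embedding n c 1 (complete_graph a) \<phi> \<and> cyc_increasing (fst (complete_graph a)) \<phi>) \<or>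
    (\<exists>\<phi>. embedding n c 2 (mon_path b) \<phi> \<and> cyc_increasing (fst (mon_path b)) \<phi>)"
proof -
  from assms(2,3) clique_or_increasing_path[of "{..<n}" a "b - 1" "\<lambda>e. c e = 2"]
  consider (clique) K where "K \<subseteq> {..<n}" "card K = a" "clique (\<lambda>e. c e \<noteq> 2) K"
    | (path) xs where "length xs = b" "set xs \<subseteq> {..<n}" "sorted_wrt (<) xs"
      "successively (\<lambda>x y. c {x, y} = 2) xs"
    by auto
  then show ?thesis
  proof cases
    case clique
    define xs where "xs = sorted_list_of_set K"
    have "finite K" using clique(1) finite_subset by blast
    with clique(2) assms(1) have xs: "length xs = a" "set xs = K" "sorted_wrt (<) xs" "xs \<noteq> []"
      by (auto simp: xs_def)
    have "clique (\<lambda>e. c e = 1) K"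
      using clique(1,3) assms(4) unfolding clique_def two_coloring_def by blast
    with xs clique(1) have "embedding n c 1 (complete_graph a) (nth xs)"
      using embedding_complete_graph_nth[of xs n c 1] strict_sorted_iff by blast
    with xs show ?thesis using cyc_increasing_nth[of xs] by auto
  next
    case path
    with assms(2) have "xs \<noteq> []" by auto
    with path show ?thesis
      using embedding_mon_path_nth[of xs n c 2] cyc_increasing_nth[of xs] strict_sorted_iff by auto
  qed
qed

definition block_coloring :: "nat \<Rightarrow> nat set \<Rightarrow> nat" where
  "block_coloring d e = (if \<forall>x\<in>e. \<forall>y\<in>e. x div d = y div d then 2 else 1)"

lemma two_coloring_block_coloring: "two_coloring n (block_coloring d)"
  unfolding two_coloring_def block_coloring_def by simp

lemma block_coloring_pair: "block_coloring d {x, y} = (if x div d = y div d then 2 else 1)"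
  by (auto simp: block_coloring_def)

lemma no_complete_graph_embedding_block_coloring:
  assumes "1 \<le> a" and "n \<le> (a - 1) * d"
  shows "\<not> embedding n (block_coloring d) 1 (complete_graph a) \<phi>"
proof
  assume emb: "embedding n (block_coloring d) 1 (complete_graph a) \<phi>"
  have "inj_on (\<lambda>i. \<phi> i div d) {..<a}"
  proof (rule inj_onI, rule ccontr)
    fix u v assume "u \<in> {..<a}" "v \<in> {..<a}" "\<phi> u div d = \<phi> v div d" "u \<noteq> v"
    then have "{u, v} \<in> snd (complete_graph a)" by (simp add: edge_complete_graph_iff)
    from embedding_edge[OF emb this] \<open>\<phi> u div d = \<phi> v div d\<close> show False
      by (simp add: block_coloring_pair)
  qed
  moreover have "(\<lambda>i. \<phi> i div d) ` {..<a} \<subseteq> {..<a - 1}"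
    using embedding_image_subset[OF emb] assms(2) by (auto intro!: less_mult_imp_div_less)
  ultimately have "card {..<a} \<le> card {..<a - 1}" by (meson card_inj_on_le finite_lessThan)
  with assms(1) show False by simp
qed

lemma no_mon_path_embedding_block_coloring:
  assumes "0 < d"
  shows "\<not> embedding n (block_coloring d) 2 (mon_path (Suc d)) \<phi>"
proof
  assume emb: "embedding n (block_coloring d) 2 (mon_path (Suc d)) \<phi>"
  have same_block: "\<phi> i div d = \<phi> 0 div d" if "i < Suc d" for i
    using that
  proof (induction i)
    case (Suc i)
    then have "{i, Suc i} \<in> snd (mon_path (Suc d))" by (simp add: edge_mon_path_iff)
    then have "block_coloring d {\<phi> i, \<phi> (Suc i)} = 2" by (rule embedding_edge[OF emb])
    with Suc show ?case by (simp add: block_coloring_pair split: if_splits)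
  qed simp
  have "inj_on (\<lambda>i. \<phi> i mod d) {..<Suc d}"
  proof (rule inj_onI)
    fix u v assume uv: "u \<in> {..<Suc d}" "v \<in> {..<Suc d}" "\<phi> u mod d = \<phi> v mod d"
    moreover from uv(1,2) have "\<phi> u div d = \<phi> v div d" by (metis lessThan_iff same_block)
    ultimately have "\<phi> u = \<phi> v" by (metis div_mult_mod_eq)
    with embedding_inj_on[OF emb] uv(1,2) show "u = v" by (simp add: inj_on_eq_iff)
  qed
  moreover have "(\<lambda>i. \<phi> i mod d) ` {..<Suc d} \<subseteq> {..<d}" using assms by auto
  ultimately have "card {..<Suc d} \<le> card {..<d}" by (meson card_inj_on_le finite_lessThan)
  then show False by simp
qed

lemma embedding_into_empty: "embedding 0 c j H \<phi> \<Longrightarrow> fst H = 0"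
  using embedding_image_subset by fastforce

lemma coloring_without_clique_and_mon_path:
  assumes "1 \<le> a" and "1 \<le> b" and "n \<le> (a - 1) * (b - 1)"
  shows "\<exists>c. two_coloring n c \<and> (\<forall>\<phi>. \<not> embedding n c 1 (complete_graph a) \<phi>) \<and>
    (\<forall>\<phi>. \<not> embedding n c 2 (mon_path b) \<phi>)"
proof (cases "n = 0")
  case True
  then have no_embedding: "\<not> embedding n c j H \<phi>" if "0 < fst H" for c j H \<phi>
    using embedding_into_empty that by fastforce
  from assms(1,2) show ?thesis
    by (intro exI[of _ "block_coloring 0"]) (simp add: no_embedding two_coloring_block_coloring)
next
  case False
  obtain d where b: "b = Suc d" using assms(2) by (cases b) auto
  with False assms(3) have "0 < d" by (cases d) simp_all
  with b assms(1,3) show ?thesis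
    using two_coloring_block_coloring no_complete_graph_embedding_block_coloring
      no_mon_path_embedding_block_coloring
    by (intro exI[of _ "block_coloring d"]) simp
qed

theorem corollary4p21:
  fixes a b :: nat
  assumes "a \<ge> 1" and "b \<ge> 1"
  shows "R_cyc (complete_graph a) (mon_path b) = 1 + (a - 1) * (b - 1)"
  unfolding R_cyc_def
proof (rule Least_equality)
  show "\<forall>c. two_coloring (1 + (a - 1) * (b - 1)) c \<longrightarrow>
    (\<exists>\<phi>. embedding (1 + (a - 1) * (b - 1)) c 1 (complete_graph a) \<phi> \<and> cyc_increasing (fst (complete_graph a)) \<phi>) \<or>
    (\<exists>\<phi>. embedding (1 + (a - 1) * (b - 1)) c 2 (mon_path b) \<phi> \<and> cyc_increasing (fst (mon_path b)) \<phi>)"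
    using assms cyc_embedding_clique_or_mon_path by blast
next
  fix m assume forces: "\<forall>c. two_coloring m c \<longrightarrow>
    (\<exists>\<phi>. embedding m c 1 (complete_graph a) \<phi> \<and> cyc_increasing (fst (complete_graph a)) \<phi>) \<or>
    (\<exists>\<phi>. embedding m c 2 (mon_path b) \<phi> \<and> cyc_increasing (fst (mon_path b)) \<phi>)"
  show "1 + (a - 1) * (b - 1) \<le> m"
  proof (rule ccontr)
    assume "\<not> 1 + (a - 1) * (b - 1) \<le> m"
    then have "m \<le> (a - 1) * (b - 1)" by simp
    with assms obtain c where "two_coloring m c" "\<forall>\<phi>. \<not> embedding m c 1 (complete_graph a) \<phi>"
      "\<forall>\<phi>. \<not> embedding m c 2 (mon_path b) \<phi>"
      using coloring_without_clique_and_mon_path by blast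
    with forces show False by blast
  qed
qed

end
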